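(* Let $X$ be a fibrewise pointed space over $B$. Then (4) $\mathrm{cat}^B_B(X)\le\mathrm{TC}^B_B(X)\le\mathrm{cat}^B_B(X\times_BX)$; and (5) for every continuous map $\lambda:B'\to B$, $\mathrm{TC}^{B'}_{B'}(\lambda^*(X))\le\mathrm{TC}^B_B(X)$.
   Context: A fibrewise space over $B$ is a space $X$ with $p_X:X\to B$; fibrewise maps satisfy $p_Y\circ f=p_X$. A fibrewise pointed space has $s_X:B\to X$ with $p_X\circ s_X=1_B$; fibrewise pointed maps satisfy also $f\circ s_X=s_Y$. A fibrewise pointed homotopy $H:X\times I\to Y$ satisfies $p_Y(H(x,t))=p_X(x)$ and $H(s_X(b),t)=s_Y(b)$; written $\simeq^B_B$. For a fibrewise pointed map $f:E\to X$, an open $U\supseteq s_X(B)$ is fibrewise pointed sectional if there is a fibrewise pointed map $s:U\to E$ with $f\circ s\simeq^B_B$ the inclusion; $\mathrm{secat}^B_B(f)$ is the least $n$ such that $X$ is covered by $n+1$ such open sets. The James–Morris fibrewise L.-S. category is $\mathrm{cat}^B_B(X)=\mathrm{secat}^B_B(s_X)$ ($B$ pointed by $1_B$), i.e. the least $n$ such that $X$ is covered by $n+1$ open sets $U\supseteq s_X(B)$ whose inclusion is fibrewise pointed homotopic to $s_X\circ p_X|_U$. $X\times_BX=\{(x,y):p_X(x)=p_X(y)\}$ with section $b\mapsto(s_X(b),s_X(b))$; $P_B(X)=\{(b,\alpha)\in B\times X^I:p_X\circ\alpha\equiv b\}$ with projection $(b,\alpha)\mapsto b$ and section $b\mapsto(b,c_{s_X(b)})$;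 $\Pi_X(b,\alpha)=(\alpha(0),\alpha(1))$; $\mathrm{TC}^B_B(X):=\mathrm{secat}^B_B(\Pi_X)$. For $\lambda:B'\to B$, $\lambda^*(X)=\{(b',x)\in B'\times X:\lambda(b')=p_X(x)\}$ with projection $(b',x)\mapsto b'$ and section $b'\mapsto(b',s_X(\lambda(b')))$, a fibrewise pointed space over $B'$. *)

theory Defs
  imports "HOL-Analysis.Analysis" "HOL-Library.Extended_Nat"
begin

definition fibrewise_pointed_space ::
  "'b topology \<Rightarrow> 'a topology \<Rightarrow> ('a \<Rightarrow> 'b) \<Rightarrow> ('b \<Rightarrow> 'a) \<Rightarrow> bool" where
  "fibrewise_pointed_space B X p s \<longleftrightarrow>
     continuous_map X B p \<and> continuous_map B X s \<and> (\<forall>b\<in>topspace B. p (s b) = b)"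

definition fp_sectional ::
  "'b topology \<Rightarrow> 'e topology \<Rightarrow> ('e \<Rightarrow> 'b) \<Rightarrow> ('b \<Rightarrow> 'e) \<Rightarrow>
   'x topology \<Rightarrow> ('x \<Rightarrow> 'b) \<Rightarrow> ('b \<Rightarrow> 'x) \<Rightarrow> ('e \<Rightarrow> 'x) \<Rightarrow> 'x set \<Rightarrow> bool" where
  "fp_sectional B E pE sE X pX sX f U \<longleftrightarrow>
     openin X U \<and> sX ` topspace B \<subseteq> U \<and>
     (\<exists>s. continuous_map (subtopology X U) E s \<and>
          (\<forall>x\<in>U. pE (s x) = pX x) \<and>
          (\<forall>b\<in>topspace B. s (sX b) = sE b) \<and>
          homotopic_with
            (\<lambda>h. (\<forall>x\<in>U. pX (h x) = pX x) \<and> (\<forall>b\<in>topspace B. h (sX b) = sX b))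
            (subtopology X U) X (f \<circ> s) id)"

text \<open>Fibrewise pointed sectional category secat^B_B(f) (infinite if no finite cover).\<close>
definition secatBB ::
  "'b topology \<Rightarrow> 'e topology \<Rightarrow> ('e \<Rightarrow> 'b) \<Rightarrow> ('b \<Rightarrow> 'e) \<Rightarrow>
   'x topology \<Rightarrow> ('x \<Rightarrow> 'b) \<Rightarrow> ('b \<Rightarrow> 'x) \<Rightarrow> ('e \<Rightarrow> 'x) \<Rightarrow> enat" where
  "secatBB B E pE sE X pX sX f =
     Inf {enat n | n. \<exists>U :: nat \<Rightarrow> 'x set.
            (\<forall>i\<le>n. fp_sectional B E pE sE X pX sX f (U i)) \<and>
            (\<Union>i\<le>n. U i) = topspace X}"

definition catBB :: "'b topology \<Rightarrow> 'a topology \<Rightarrow> ('a \<Rightarrow> 'b) \<Rightarrow> ('b \<Rightarrow> 'a) \<Rightarrow> enat" where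
  "catBB B X p s = secatBB B B id id X p s s"

definition fib_prod_space :: "('a \<Rightarrow> 'b) \<Rightarrow> 'a topology \<Rightarrow> ('a \<times> 'a) topology" where
  "fib_prod_space p X = subtopology (prod_topology X X)
     {(x, y). x \<in> topspace X \<and> y \<in> topspace X \<and> p x = p y}"

definition fib_prod_proj :: "('a \<Rightarrow> 'b) \<Rightarrow> 'a \<times> 'a \<Rightarrow> 'b" where
  "fib_prod_proj p = (\<lambda>(x, y). p x)"

definition fib_prod_sec :: "('b \<Rightarrow> 'a) \<Rightarrow> 'b \<Rightarrow> 'a \<times> 'a" where
  "fib_prod_sec s = (\<lambda>b. (s b, s b))"

text \<open>Compact-open topology on the paths I -> X (paths represented as functions
  real => 'a that are continuous on I = [0,1] and undefined outside I).\<close>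
definition path_space_top :: "'a topology \<Rightarrow> (real \<Rightarrow> 'a) topology" where
  "path_space_top X = subtopology
     (topology_generated_by
        {{\<alpha>. \<alpha> ` K \<subseteq> U} | K U. compactin (top_of_set {0..1::real}) K \<and> openin X U})
     {\<alpha>. pathin X \<alpha> \<and> \<alpha> \<in> extensional {0..1}}"

definition fib_path_space ::
  "'b topology \<Rightarrow> 'a topology \<Rightarrow> ('a \<Rightarrow> 'b) \<Rightarrow> ('b \<times> (real \<Rightarrow> 'a)) topology" where
  "fib_path_space B X p = subtopology (prod_topology B (path_space_top X))
     {(b, \<alpha>). b \<in> topspace B \<and> pathin X \<alpha> \<and> \<alpha> \<in> extensional {0..1} \<and>
               (\<forall>t\<in>{0..1}. p (\<alpha> t) = b)}"

definition fib_path_proj :: "'b \<times> (real \<Rightarrow> 'a) \<Rightarrow> 'b" where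
  "fib_path_proj = fst"

definition fib_path_sec :: "('b \<Rightarrow> 'a) \<Rightarrow> 'b \<Rightarrow> 'b \<times> (real \<Rightarrow> 'a)" where
  "fib_path_sec s = (\<lambda>b. (b, restrict (\<lambda>t. s b) {0..1}))"

definition fib_Pi :: "'b \<times> (real \<Rightarrow> 'a) \<Rightarrow> 'a \<times> 'a" where
  "fib_Pi = (\<lambda>(b, \<alpha>). (\<alpha> 0, \<alpha> 1))"

definition TCBB :: "'b topology \<Rightarrow> 'a topology \<Rightarrow> ('a \<Rightarrow> 'b) \<Rightarrow> ('b \<Rightarrow> 'a) \<Rightarrow> enat" where
  "TCBB B X p s =
     secatBB B (fib_path_space B X p) fib_path_proj (fib_path_sec s)
              (fib_prod_space p X) (fib_prod_proj p) (fib_prod_sec s) fib_Pi"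

definition pullback_space ::
  "'c topology \<Rightarrow> ('c \<Rightarrow> 'b) \<Rightarrow> 'a topology \<Rightarrow> ('a \<Rightarrow> 'b) \<Rightarrow> ('c \<times> 'a) topology" where
  "pullback_space B' lam X p = subtopology (prod_topology B' X)
     {(b', x). b' \<in> topspace B' \<and> x \<in> topspace X \<and> lam b' = p x}"

definition pullback_proj :: "'c \<times> 'a \<Rightarrow> 'c" where
  "pullback_proj = fst"

definition pullback_sec :: "('c \<Rightarrow> 'b) \<Rightarrow> ('b \<Rightarrow> 'a) \<Rightarrow> 'c \<Rightarrow> 'c \<times> 'a" where
  "pullback_sec lam s = (\<lambda>b'. (b', s (lam b')))"

end

theory Submission
  imports Defs
begin

(*
  All three inequalities compare covers by sectional open sets, so it suffices to carry a
  sectional set back along a fibrewise pointed map between the targets of the two maps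
  whose sectional categories are compared.

  For cat <= TC: a motion planner sigma on V in X x_B X gives, on U = {x. (x, s (p x)) : V},
  the fibrewise path sigma (x, s (p x)), whose end points are fibrewise homotopic to x and to
  s (p x); read as a homotopy it deforms the identity of U into s o p.
  For TC <= cat (X x_B X): Pi composed with the constant-path section of P_B(X) is the diagonal
  section of X x_B X, so every categorical set is a motion-planning domain.
  For the pullback: a planner for X pulls back along lam^*X x_B' lam^*X -> X x_B X, because
  paths and homotopies in X lying over lam b' are paths and homotopies in lam^*X over b'.
*)

lemma Union_compact_open_subbasis:
  "\<Union>{{\<alpha>::real \<Rightarrow> 'a. \<alpha> ` K \<subseteq> U} | K U. compactin (top_of_set {0..1::real}) K \<and> openin X U} = UNIV"
proof -
  have "UNIV \<in> {{\<alpha>::real \<Rightarrow> 'a. \<alpha> ` K \<subseteq> U} | K U. compactin (top_of_set {0..1::real}) K \<and> openin X U}"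
    by (rule CollectI, rule exI[of _ "{}"], rule exI[of _ "{}"]) auto
  then show ?thesis by blast
qed

lemma topspace_path_space_top:
  "topspace (path_space_top X) = {\<alpha>. pathin X \<alpha> \<and> \<alpha> \<in> extensional {0..1}}"
  unfolding path_space_top_def by (simp add: Union_compact_open_subbasis)

lemma continuous_map_path_space_curry:
  assumes f: "continuous_map (prod_topology Z (top_of_set {0..1})) X (\<lambda>(z, t). f z t)"
  shows "continuous_map Z (path_space_top X) (\<lambda>z. restrict (f z) {0..1})"
  unfolding path_space_top_def
proof (rule continuous_map_in_subtopology[THEN iffD2], intro conjI)
  have "pathin X (restrict (f z) {0..1})" if "z \<in> topspace Z" for z
    using continuous_map_o_Pair[OF f that] unfolding pathin_def
    by (rule continuous_map_eq) auto
  then show "(\<lambda>z. restrict (f z) {0..1}) \<in> topspace Z \<rightarrow> {\<alpha>. pathin X \<alpha> \<and> \<alpha> \<in> extensional {0..1}}"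
    by auto
  show "continuous_map Z (topology_generated_by
     {{\<alpha>. \<alpha> ` K \<subseteq> U} | K U. compactin (top_of_set {0..1}) K \<and> openin X U}) (\<lambda>z. restrict (f z) {0..1})"
  proof (rule continuous_on_generated_topo)
    fix V assume "V \<in> {{\<alpha>. \<alpha> ` K \<subseteq> U} | K U. compactin (top_of_set {0..1::real}) K \<and> openin X U}"
    then obtain K U where V: "V = {\<alpha>. \<alpha> ` K \<subseteq> U}" and K: "compactin (top_of_set {0..1::real}) K"
      and U: "openin X U" by blast
    have K01: "K \<subseteq> {0..1}" using compactin_subset_topspace[OF K] by simp
    let ?W = "{w \<in> topspace (prod_topology Z (top_of_set {0..1})). (\<lambda>(z, t). f z t) w \<in> U}"
    have W: "openin (prod_topology Z (top_of_set {0..1})) ?W"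
      using openin_continuous_map_preimage[OF f U] .
    show "openin Z ((\<lambda>z. restrict (f z) {0..1}) -` V \<inter> topspace Z)"
    proof (rule openin_subopen[THEN iffD2], intro ballI)
      fix z0 assume z0: "z0 \<in> (\<lambda>z. restrict (f z) {0..1}) -` V \<inter> topspace Z"
      have "{z0} \<times> K \<subseteq> ?W"
      proof
        fix w assume "w \<in> {z0} \<times> K"
        then obtain t where w: "w = (z0, t)" "t \<in> K" by blast
        have "restrict (f z0) {0..1} t \<in> U" using z0 V w(2) by blast
        then show "w \<in> ?W" using w K01 z0 by auto
      qed
      moreover have "z0 \<in> topspace Z" using z0 by blast
      ultimately obtain A C where A: "openin Z A" "z0 \<in> A" and C: "K \<subseteq> C" and AC: "A \<times> C \<subseteq> ?W"
        using tube_lemma_right[OF W K, of z0] by auto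
      have "A \<subseteq> (\<lambda>z. restrict (f z) {0..1}) -` V \<inter> topspace Z"
      proof
        fix z assume "z \<in> A"
        then have "\<forall>t\<in>K. (z, t) \<in> ?W" using AC C by blast
        moreover have "z \<in> topspace Z" using \<open>z \<in> A\<close> A(1) openin_subset by blast
        ultimately show "z \<in> (\<lambda>z. restrict (f z) {0..1}) -` V \<inter> topspace Z"
          using V K01 by auto
      qed
      then show "\<exists>T. openin Z T \<and> z0 \<in> T \<and> T \<subseteq> (\<lambda>z. restrict (f z) {0..1}) -` V \<inter> topspace Z"
        using A by blast
    qed
  qed (simp add: Union_compact_open_subbasis)
qed

lemma openin_path_space_top_image_subset:
  assumes "compactin (top_of_set {0..1}) K" "openin X U"
  shows "openin (path_space_top X) (topspace (path_space_top X) \<inter> {\<alpha>. \<alpha> ` K \<subseteq> U})"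
  unfolding topspace_path_space_top unfolding path_space_top_def
  by (rule openin_subtopology_Int2, rule topology_generated_by_Basis) (use assms in blast)

lemma continuous_map_path_space_eval:
  "continuous_map (prod_topology (path_space_top X) (top_of_set {0..1})) X (\<lambda>(\<alpha>, t). \<alpha> t)"
proof (subst continuous_map_openin_preimage_eq, intro conjI allI impI)
  let ?PI = "prod_topology (path_space_top X) (top_of_set {0..1})"
  show "(\<lambda>(\<alpha>, t). \<alpha> t) \<in> topspace ?PI \<rightarrow> topspace X"
    by (auto simp: topspace_path_space_top pathin_def continuous_map_def)
  fix W assume W: "openin X W"
  show "openin ?PI (topspace ?PI \<inter> (\<lambda>(\<alpha>, t). \<alpha> t) -` W)"
  proof (rule openin_subopen[THEN iffD2], intro ballI)
    fix w assume w: "w \<in> topspace ?PI \<inter> (\<lambda>(\<alpha>, t). \<alpha> t) -` W"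
    obtain \<alpha>0 t0 where w_eq: "w = (\<alpha>0, t0)" by (cases w)
    have \<alpha>0: "\<alpha>0 \<in> topspace (path_space_top X)" and t0: "t0 \<in> {0..1}" and "\<alpha>0 t0 \<in> W"
      using w by (auto simp: w_eq)
    moreover have "openin (top_of_set {0..1}) {t \<in> {0..1}. \<alpha>0 t \<in> W}"
      using openin_continuous_map_preimage[OF _ W, of "top_of_set {0..1}" \<alpha>0] \<alpha>0
      by (simp add: topspace_path_space_top pathin_def)
    ultimately obtain e where e: "e > 0"
      and eW: "\<And>t. t \<in> {0..1} \<Longrightarrow> dist t t0 < e \<Longrightarrow> \<alpha>0 t \<in> W"
      unfolding openin_euclidean_subtopology_iff by auto
    define K where "K = {0..1} \<inter> cball t0 (e/2)"
    have K: "compactin (top_of_set {0..1::real}) K"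
      unfolding K_def compactin_subtopology by (auto intro!: compact_Int_closed)
    define N where "N = (topspace (path_space_top X) \<inter> {\<alpha>. \<alpha> ` K \<subseteq> W}) \<times> ({0..1} \<inter> ball t0 (e/2))"
    have "openin ?PI N"
      unfolding N_def openin_prod_Times_iff
      using openin_path_space_top_image_subset[OF K W] by (auto intro: openin_subtopology_Int2)
    moreover have "w \<in> N"
      using \<alpha>0 t0 e eW by (auto simp: N_def K_def w_eq dist_commute)
    moreover have "N \<subseteq> topspace ?PI \<inter> (\<lambda>(\<alpha>, t). \<alpha> t) -` W"
      by (force simp: N_def K_def)
    ultimately show "\<exists>T. openin ?PI T \<and> w \<in> T \<and> T \<subseteq> topspace ?PI \<inter> (\<lambda>(\<alpha>, t). \<alpha> t) -` W"
      by blast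
  qed
qed

lemma continuous_map_path_space_uncurry:
  assumes "continuous_map Z (path_space_top X) \<gamma>"
  shows "continuous_map (prod_topology Z (top_of_set {0..1})) X (\<lambda>(z, t). \<gamma> z t)"
proof -
  have "continuous_map (prod_topology Z (top_of_set {0..1}))
          (prod_topology (path_space_top X) (top_of_set {0..1})) (\<lambda>(z, t). (\<gamma> z, t))"
    using continuous_map_compose[OF continuous_map_fst assms]
    by (simp add: continuous_map_paired case_prod_unfold o_def continuous_map_snd)
  from continuous_map_compose[OF this continuous_map_path_space_eval]
  show ?thesis by (simp add: o_def case_prod_unfold)
qed

lemma continuous_map_subtopology_preimage:
  assumes "continuous_map X Y f"
  shows "continuous_map (subtopology X {x \<in> topspace X. f x \<in> V}) (subtopology Y V) f"
  using continuous_map_from_subtopology[OF assms]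
  by (auto simp: continuous_map_in_subtopology)

lemma fibrewise_pointed_spaceD:
  assumes "fibrewise_pointed_space B X p s"
  shows "continuous_map X B p" "continuous_map B X s" "\<And>b. b \<in> topspace B \<Longrightarrow> p (s b) = b"
  using assms unfolding fibrewise_pointed_space_def by auto

lemma topspace_fib_prod_space:
  "topspace (fib_prod_space p X) = {(x, y). x \<in> topspace X \<and> y \<in> topspace X \<and> p x = p y}"
  unfolding fib_prod_space_def by auto

lemma continuous_map_fib_prod_space_iff:
  "continuous_map Z (fib_prod_space p X) f \<longleftrightarrow>
     continuous_map Z (prod_topology X X) f \<and>
     f \<in> topspace Z \<rightarrow> {(x, y). x \<in> topspace X \<and> y \<in> topspace X \<and> p x = p y}"
  unfolding fib_prod_space_def by (rule continuous_map_in_subtopology)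

lemma continuous_map_fst_fib_prod_space: "continuous_map (fib_prod_space p X) X fst"
  unfolding fib_prod_space_def by (rule continuous_map_subtopology_fst)

lemma continuous_map_snd_fib_prod_space: "continuous_map (fib_prod_space p X) X snd"
  unfolding fib_prod_space_def by (rule continuous_map_subtopology_snd)

lemma fib_prod_proj_eq: "fib_prod_proj p z = p (fst z)"
  by (simp add: fib_prod_proj_def case_prod_unfold)

lemma topspace_pullback_space:
  "topspace (pullback_space B' lam X p) =
     {(b', x). b' \<in> topspace B' \<and> x \<in> topspace X \<and> lam b' = p x}"
  unfolding pullback_space_def by auto

lemma continuous_map_pullback_space_iff:
  "continuous_map Z (pullback_space B' lam X p) f \<longleftrightarrow>
     continuous_map Z (prod_topology B' X) f \<and>
     f \<in> topspace Z \<rightarrow> {(b', x). b' \<in> topspace B' \<and> x \<in> topspace X \<and> lam b' = p x}"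
  unfolding pullback_space_def by (rule continuous_map_in_subtopology)

lemma topspace_fib_path_space:
  "topspace (fib_path_space B X p) =
     {(b, \<alpha>). b \<in> topspace B \<and> pathin X \<alpha> \<and> \<alpha> \<in> extensional {0..1} \<and> (\<forall>t\<in>{0..1}. p (\<alpha> t) = b)}"
  unfolding fib_path_space_def by (auto simp: topspace_path_space_top)

lemma continuous_map_snd_fib_path_space: "continuous_map (fib_path_space B X p) (path_space_top X) snd"
  unfolding fib_path_space_def by (rule continuous_map_subtopology_snd)

lemma continuous_map_into_fib_path_space:
  assumes g: "continuous_map Z B g"
    and f: "continuous_map (prod_topology Z (top_of_set {0..1})) X (\<lambda>(z, t). f z t)"
    and pf: "\<And>z t. z \<in> topspace Z \<Longrightarrow> t \<in> {0..1} \<Longrightarrow> p (f z t) = g z"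
  shows "continuous_map Z (fib_path_space B X p) (\<lambda>z. (g z, restrict (f z) {0..1}))"
  unfolding fib_path_space_def
proof (rule continuous_map_in_subtopology[THEN iffD2], intro conjI)
  have cf: "continuous_map Z (path_space_top X) (\<lambda>z. restrict (f z) {0..1})"
    by (rule continuous_map_path_space_curry[OF f])
  then show "continuous_map Z (prod_topology B (path_space_top X)) (\<lambda>z. (g z, restrict (f z) {0..1}))"
    using g by (simp add: continuous_map_paired)
  show "(\<lambda>z. (g z, restrict (f z) {0..1})) \<in> topspace Z \<rightarrow>
     {(b, \<alpha>). b \<in> topspace B \<and> pathin X \<alpha> \<and> \<alpha> \<in> extensional {0..1} \<and> (\<forall>t\<in>{0..1}. p (\<alpha> t) = b)}"
    using continuous_map_funspace[OF cf] continuous_map_funspace[OF g] pf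
    by (fastforce simp: topspace_path_space_top)
qed

lemma fib_Pi_eq: "fib_Pi z = (snd z 0, snd z 1)"
  by (simp add: fib_Pi_def case_prod_unfold)

definition fp_homotopic ::
  "'b topology \<Rightarrow> 'z topology \<Rightarrow> ('z \<Rightarrow> 'b) \<Rightarrow> ('b \<Rightarrow> 'z) \<Rightarrow>
   'y topology \<Rightarrow> ('y \<Rightarrow> 'b) \<Rightarrow> ('b \<Rightarrow> 'y) \<Rightarrow> ('z \<Rightarrow> 'y) \<Rightarrow> ('z \<Rightarrow> 'y) \<Rightarrow> bool" where
  "fp_homotopic B Z pZ sZ Y pY sY f g \<longleftrightarrow>
     homotopic_with (\<lambda>h. (\<forall>z\<in>topspace Z. pY (h z) = pZ z) \<and> (\<forall>b\<in>topspace B. h (sZ b) = sY b))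
       Z Y f g"

lemma fp_sectional_iff:
  "fp_sectional B E pE sE X pX sX f U \<longleftrightarrow>
     openin X U \<and> sX ` topspace B \<subseteq> U \<and>
     (\<exists>\<sigma>. continuous_map (subtopology X U) E \<sigma> \<and>
          (\<forall>x\<in>U. pE (\<sigma> x) = pX x) \<and> (\<forall>b\<in>topspace B. \<sigma> (sX b) = sE b) \<and>
          fp_homotopic B (subtopology X U) pX sX X pX sX (f \<circ> \<sigma>) id)"
proof -
  have "topspace (subtopology X U) = U" if "openin X U"
    using openin_subset[OF that] by (rule topspace_subtopology_subset)
  then show ?thesis
    unfolding fp_sectional_def fp_homotopic_def by auto
qed

lemma fp_homotopic_sym:
  "fp_homotopic B Z pZ sZ Y pY sY f g \<Longrightarrow> fp_homotopic B Z pZ sZ Y pY sY g f"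
  unfolding fp_homotopic_def by (rule homotopic_with_symD)

lemma fp_homotopic_trans [trans]:
  "fp_homotopic B Z pZ sZ Y pY sY f g \<Longrightarrow> fp_homotopic B Z pZ sZ Y pY sY g h \<Longrightarrow>
   fp_homotopic B Z pZ sZ Y pY sY f h"
  unfolding fp_homotopic_def by (rule homotopic_with_trans)

lemma fp_homotopic_eq:
  assumes "fp_homotopic B Z pZ sZ Y pY sY f g" and "sZ ` topspace B \<subseteq> topspace Z"
    and "\<And>z. z \<in> topspace Z \<Longrightarrow> f' z = f z" "\<And>z. z \<in> topspace Z \<Longrightarrow> g' z = g z"
  shows "fp_homotopic B Z pZ sZ Y pY sY f' g'"
  using assms unfolding fp_homotopic_def
  by (elim homotopic_with_eq) (auto simp: image_subset_iff)

lemma fp_homotopic_compose_right: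
  assumes "fp_homotopic B Z pZ sZ Y pY sY f g" and j: "continuous_map W Z j"
    and "\<And>w. w \<in> topspace W \<Longrightarrow> pZ (j w) = pW w" "\<And>b. b \<in> topspace B \<Longrightarrow> j (sW b) = sZ b"
  shows "fp_homotopic B W pW sW Y pY sY (f \<circ> j) (g \<circ> j)"
  using assms(1) unfolding fp_homotopic_def
  by (rule homotopic_with_compose_continuous_map_right[OF _ j])
     (use assms(3,4) continuous_map_image_subset_topspace[OF j] in \<open>auto simp: image_subset_iff\<close>)

lemma fp_homotopic_compose_left:
  assumes hom: "fp_homotopic B Z pZ sZ Y pY sY f g" and k: "continuous_map Y Y' k"
    and "\<And>y. y \<in> topspace Y \<Longrightarrow> pY' (k y) = pY y" "\<And>b. b \<in> topspace B \<Longrightarrow> k (sY b) = sY' b"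
  shows "fp_homotopic B Z pZ sZ Y' pY' sY' (k \<circ> f) (k \<circ> g)"
proof -
  have "homotopic_with (\<lambda>h. continuous_map Z Y h \<and> (\<forall>z\<in>topspace Z. pY (h z) = pZ z) \<and>
          (\<forall>b\<in>topspace B. h (sZ b) = sY b)) Z Y f g"
    using hom unfolding fp_homotopic_def by (rule homotopic_with_mono) simp
  then show ?thesis
    unfolding fp_homotopic_def
    by (rule homotopic_with_compose_continuous_map_left[OF _ k])
       (use assms continuous_map_funspace in fastforce)
qed

lemma fp_homotopic_path_ends:
  assumes \<gamma>: "continuous_map Z (path_space_top Y) \<gamma>"
    and "\<And>z t. z \<in> topspace Z \<Longrightarrow> t \<in> {0..1} \<Longrightarrow> pY (\<gamma> z t) = pZ z"
    and "\<And>b t. b \<in> topspace B \<Longrightarrow> t \<in> {0..1} \<Longrightarrow> \<gamma> (sZ b) t = sY b"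
  shows "fp_homotopic B Z pZ sZ Y pY sY (\<lambda>z. \<gamma> z 0) (\<lambda>z. \<gamma> z 1)"
  unfolding fp_homotopic_def homotopic_with_def
proof (intro exI[of _ "\<lambda>(t, z). \<gamma> z t"] conjI)
  have "continuous_map (prod_topology (top_of_set {0..1}) Z) (prod_topology Z (top_of_set {0..1}))
          (\<lambda>(t, z). (z, t))"
    by (simp add: continuous_map_paired case_prod_unfold continuous_map_fst continuous_map_snd)
  from continuous_map_compose[OF this continuous_map_path_space_uncurry[OF \<gamma>]]
  show "continuous_map (prod_topology (top_of_set {0..1}) Z) Y (\<lambda>(t, z). \<gamma> z t)"
    by (simp add: o_def case_prod_unfold)
qed (use assms in auto)

lemma secatBB_le_preimage:
  assumes img: "\<phi> ` topspace X2 \<subseteq> topspace X1"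
    and sectional: "\<And>U. fp_sectional B1 E1 pE1 sE1 X1 pX1 sX1 f1 U \<Longrightarrow>
             fp_sectional B2 E2 pE2 sE2 X2 pX2 sX2 f2 {x \<in> topspace X2. \<phi> x \<in> U}"
  shows "secatBB B2 E2 pE2 sE2 X2 pX2 sX2 f2 \<le> secatBB B1 E1 pE1 sE1 X1 pX1 sX1 f1"
  unfolding secatBB_def
proof (rule Inf_superset_mono, rule subsetI)
  fix m assume "m \<in> {enat n | n. \<exists>U. (\<forall>i\<le>n. fp_sectional B1 E1 pE1 sE1 X1 pX1 sX1 f1 (U i)) \<and>
            (\<Union>i\<le>n. U i) = topspace X1}"
  then obtain n U where m: "m = enat n" and U: "\<forall>i\<le>n. fp_sectional B1 E1 pE1 sE1 X1 pX1 sX1 f1 (U i)"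
    and cover: "(\<Union>i\<le>n. U i) = topspace X1" by blast
  define V where "V i = {x \<in> topspace X2. \<phi> x \<in> U i}" for i
  have "\<forall>i\<le>n. fp_sectional B2 E2 pE2 sE2 X2 pX2 sX2 f2 (V i)"
    using U sectional unfolding V_def by blast
  moreover have "(\<Union>i\<le>n. V i) = topspace X2"
    using img cover unfolding V_def by blast
  ultimately show "m \<in> {enat n | n. \<exists>U. (\<forall>i\<le>n. fp_sectional B2 E2 pE2 sE2 X2 pX2 sX2 f2 (U i)) \<and>
            (\<Union>i\<le>n. U i) = topspace X2}"
    using m by blast
qed

lemma continuous_map_fib_prod_space_Pair_section:
  assumes "fibrewise_pointed_space B X p s"
  shows "continuous_map X (fib_prod_space p X) (\<lambda>x. (x, s (p x)))"
proof -
  note cp = fibrewise_pointed_spaceD(1)[OF assms] and cs = fibrewise_pointed_spaceD(2)[OF assms]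
    and ps = fibrewise_pointed_spaceD(3)[OF assms]
  have "p (s (p x)) = p x" if "x \<in> topspace X" for x
    using ps continuous_map_image_subset_topspace[OF cp] that by blast
  then show ?thesis
    unfolding continuous_map_fib_prod_space_iff
    using continuous_map_compose[OF cp cs] continuous_map_image_subset_topspace[OF cp]
      continuous_map_image_subset_topspace[OF cs]
    by (auto simp: continuous_map_paired o_def)
qed

lemma fp_homotopic_fst_snd_of_planner:
  assumes c\<sigma>: "continuous_map Z (fib_path_space B X p) \<sigma>"
    and \<sigma>p: "\<And>z. z \<in> topspace Z \<Longrightarrow> fst (\<sigma> z) = pZ z"
    and \<sigma>s: "\<And>b. b \<in> topspace B \<Longrightarrow> \<sigma> (sZ b) = fib_path_sec s b"
    and hom: "fp_homotopic B Z pZ sZ (fib_prod_space p X) (fib_prod_proj p) (fib_prod_sec s)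
                (fib_Pi \<circ> \<sigma>) k"
  shows "fp_homotopic B Z pZ sZ X p s (fst \<circ> k) (snd \<circ> k)"
proof -
  define \<gamma> where "\<gamma> = snd \<circ> \<sigma>"
  have c\<gamma>: "continuous_map Z (path_space_top X) \<gamma>"
    unfolding \<gamma>_def by (rule continuous_map_compose[OF c\<sigma> continuous_map_snd_fib_path_space])
  have \<gamma>p: "p (\<gamma> z t) = pZ z" if "z \<in> topspace Z" "t \<in> {0..1}" for z t
    using continuous_map_image_subset_topspace[OF c\<sigma>] \<sigma>p that
    by (fastforce simp: \<gamma>_def topspace_fib_path_space)
  have "fp_homotopic B Z pZ sZ X p s (fst \<circ> k) (fst \<circ> (fib_Pi \<circ> \<sigma>))"
    by (rule fp_homotopic_sym, rule fp_homotopic_compose_left[OF hom continuous_map_fst_fib_prod_space])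
       (auto simp: fib_prod_proj_def fib_prod_sec_def)
  also have "fst \<circ> (fib_Pi \<circ> \<sigma>) = (\<lambda>z. \<gamma> z 0)"
    by (auto simp: \<gamma>_def fib_Pi_eq)
  also have "fp_homotopic B Z pZ sZ X p s \<dots> (\<lambda>z. \<gamma> z 1)"
    by (rule fp_homotopic_path_ends[OF c\<gamma>]) (use \<gamma>p \<sigma>s in \<open>auto simp: \<gamma>_def fib_path_sec_def\<close>)
  also have "(\<lambda>z. \<gamma> z 1) = snd \<circ> (fib_Pi \<circ> \<sigma>)"
    by (auto simp: \<gamma>_def fib_Pi_eq)
  also have "fp_homotopic B Z pZ sZ X p s \<dots> (snd \<circ> k)"
    by (rule fp_homotopic_compose_left[OF hom continuous_map_snd_fib_prod_space])
       (auto simp: topspace_fib_prod_space fib_prod_proj_def fib_prod_sec_def)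
  finally show ?thesis .
qed

lemma fp_sectional_section_preimage:
  assumes fps: "fibrewise_pointed_space B X p s"
    and V: "fp_sectional B (fib_path_space B X p) fib_path_proj (fib_path_sec s)
              (fib_prod_space p X) (fib_prod_proj p) (fib_prod_sec s) fib_Pi V"
  shows "fp_sectional B B id id X p s s {x \<in> topspace X. (x, s (p x)) \<in> V}"
proof -
  note cp = fibrewise_pointed_spaceD(1)[OF fps] and cs = fibrewise_pointed_spaceD(2)[OF fps]
    and ps = fibrewise_pointed_spaceD(3)[OF fps]
  let ?XX = "fib_prod_space p X"
  obtain \<sigma> where oV: "openin ?XX V" and secV: "fib_prod_sec s ` topspace B \<subseteq> V"
    and c\<sigma>: "continuous_map (subtopology ?XX V) (fib_path_space B X p) \<sigma>"
    and \<sigma>p: "\<forall>z\<in>V. fib_path_proj (\<sigma> z) = fib_prod_proj p z"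
    and \<sigma>s: "\<forall>b\<in>topspace B. \<sigma> (fib_prod_sec s b) = fib_path_sec s b"
    and hom: "fp_homotopic B (subtopology ?XX V) (fib_prod_proj p) (fib_prod_sec s)
                ?XX (fib_prod_proj p) (fib_prod_sec s) (fib_Pi \<circ> \<sigma>) id"
    using V unfolding fp_sectional_iff by blast
  define j where "j x = (x, s (p x))" for x
  define U where "U = {x \<in> topspace X. j x \<in> V}"
  have cj: "continuous_map X ?XX j"
    unfolding j_def by (rule continuous_map_fib_prod_space_Pair_section[OF fps])
  have oU: "openin X U"
    unfolding U_def by (rule openin_continuous_map_preimage[OF cj oV])
  have tsU: "topspace (subtopology X U) = U"
    using openin_subset[OF oU] by (rule topspace_subtopology_subset)
  have js: "j (s b) = fib_prod_sec s b" if "b \<in> topspace B" for b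
    using ps[OF that] by (simp add: j_def fib_prod_sec_def)
  have sU: "s ` topspace B \<subseteq> U"
    using secV js continuous_map_image_subset_topspace[OF cs] by (auto simp: U_def)
  have cjU: "continuous_map (subtopology X U) (subtopology ?XX V) j"
    unfolding U_def by (rule continuous_map_subtopology_preimage[OF cj])
  have homj: "fp_homotopic B (subtopology X U) p s ?XX (fib_prod_proj p) (fib_prod_sec s)
                (fib_Pi \<circ> (\<sigma> \<circ> j)) j"
    using fp_homotopic_compose_right[OF hom cjU] js
    by (simp add: j_def fib_prod_proj_eq o_assoc)
  have "fp_homotopic B (subtopology X U) p s X p s (fst \<circ> j) (snd \<circ> j)"
    by (rule fp_homotopic_fst_snd_of_planner[OF continuous_map_compose[OF cjU c\<sigma>] _ _ homj])
       (use \<sigma>p \<sigma>s js tsU in \<open>auto simp: U_def fib_path_proj_def fib_prod_proj_eq j_def\<close>)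
  moreover have "fst \<circ> j = id" "snd \<circ> j = s \<circ> p"
    by (auto simp: j_def)
  ultimately have "fp_homotopic B (subtopology X U) p s X p s (s \<circ> p) id"
    using fp_homotopic_sym by metis
  then have "fp_sectional B B id id X p s s U"
    unfolding fp_sectional_iff
    using oU sU ps continuous_map_from_subtopology[OF cp] by (auto intro!: exI[of _ p])
  then show ?thesis
    by (simp add: U_def j_def)
qed

lemma continuous_map_fib_path_sec:
  assumes "fibrewise_pointed_space B X p s"
  shows "continuous_map B (fib_path_space B X p) (fib_path_sec s)"
proof -
  note cs = fibrewise_pointed_spaceD(2)[OF assms] and ps = fibrewise_pointed_spaceD(3)[OF assms]
  have "continuous_map (prod_topology B (top_of_set {0..1})) X (\<lambda>(b, t). s b)"
    using continuous_map_compose[OF continuous_map_fst cs] by (simp add: o_def case_prod_unfold)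
  from continuous_map_into_fib_path_space[OF continuous_map_id this] ps
  show ?thesis
    by (simp add: fib_path_sec_def)
qed

lemma fp_sectional_factor:
  assumes U: "fp_sectional B E pE sE X pX sX f U"
    and g: "continuous_map E E' g"
    and gp: "\<And>e. e \<in> topspace E \<Longrightarrow> pE' (g e) = pE e"
    and gs: "\<And>b. b \<in> topspace B \<Longrightarrow> g (sE b) = sE' b"
    and fg: "\<And>e. e \<in> topspace E \<Longrightarrow> f' (g e) = f e"
  shows "fp_sectional B E' pE' sE' X pX sX f' U"
proof -
  obtain \<sigma> where oU: "openin X U" and sU: "sX ` topspace B \<subseteq> U"
    and c\<sigma>: "continuous_map (subtopology X U) E \<sigma>"
    and \<sigma>p: "\<forall>x\<in>U. pE (\<sigma> x) = pX x" and \<sigma>s: "\<forall>b\<in>topspace B. \<sigma> (sX b) = sE b"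
    and hom: "fp_homotopic B (subtopology X U) pX sX X pX sX (f \<circ> \<sigma>) id"
    using U unfolding fp_sectional_iff by blast
  have tsU: "topspace (subtopology X U) = U"
    using openin_subset[OF oU] by (rule topspace_subtopology_subset)
  have \<sigma>E: "\<sigma> x \<in> topspace E" if "x \<in> U" for x
    using continuous_map_image_subset_topspace[OF c\<sigma>] tsU that by blast
  have "fp_homotopic B (subtopology X U) pX sX X pX sX (f' \<circ> (g \<circ> \<sigma>)) id"
    by (rule fp_homotopic_eq[OF hom]) (use sU tsU \<sigma>E fg in auto)
  then show ?thesis
    unfolding fp_sectional_iff
    using oU sU continuous_map_compose[OF c\<sigma> g] \<sigma>p \<sigma>s \<sigma>E gp gs
    by (auto intro!: exI[of _ "g \<circ> \<sigma>"])
qed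

lemma secatBB_factor_le:
  assumes "continuous_map E E' g"
    and "\<And>e. e \<in> topspace E \<Longrightarrow> pE' (g e) = pE e"
    and "\<And>b. b \<in> topspace B \<Longrightarrow> g (sE b) = sE' b"
    and "\<And>e. e \<in> topspace E \<Longrightarrow> f' (g e) = f e"
  shows "secatBB B E' pE' sE' X pX sX f' \<le> secatBB B E pE sE X pX sX f"
proof (rule secatBB_le_preimage[where \<phi> = id])
  fix U assume U: "fp_sectional B E pE sE X pX sX f U"
  then have "{x \<in> topspace X. id x \<in> U} = U"
    unfolding fp_sectional_def using openin_subset by auto
  then show "fp_sectional B E' pE' sE' X pX sX f' {x \<in> topspace X. id x \<in> U}"
    using fp_sectional_factor[OF U assms] by simp
qed simp

lemma fp_homotopic_pullback:
  assumes hom: "fp_homotopic B Z pZ sZ Y pY sY f g"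
    and lam: "continuous_map B' B lam" and \<beta>: "continuous_map W B' \<beta>" and \<phi>: "continuous_map W Z \<phi>"
    and \<phi>p: "\<And>w. w \<in> topspace W \<Longrightarrow> pZ (\<phi> w) = lam (\<beta> w)"
    and \<beta>s: "\<And>b. b \<in> topspace B' \<Longrightarrow> \<beta> (sW b) = b"
    and \<phi>s: "\<And>b. b \<in> topspace B' \<Longrightarrow> \<phi> (sW b) = sZ (lam b)"
  shows "fp_homotopic B' W \<beta> sW (pullback_space B' lam Y pY) pullback_proj (pullback_sec lam sY)
           (\<lambda>w. (\<beta> w, f (\<phi> w))) (\<lambda>w. (\<beta> w, g (\<phi> w)))"
proof -
  obtain k where k: "continuous_map (prod_topology (top_of_set {0..1::real}) Z) Y k"
    and k0: "\<forall>z. k (0, z) = f z" and k1: "\<forall>z. k (1, z) = g z"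
    and kt: "\<forall>t\<in>{0..1}. (\<forall>z\<in>topspace Z. pY (k (t, z)) = pZ z) \<and> (\<forall>b\<in>topspace B. k (t, sZ b) = sY b)"
    using hom unfolding fp_homotopic_def homotopic_with_def by blast
  let ?IW = "prod_topology (top_of_set {0..1::real}) W"
  have "continuous_map ?IW (prod_topology (top_of_set {0..1}) Z) (\<lambda>(t, w). (t, \<phi> w))"
    using continuous_map_compose[OF continuous_map_snd \<phi>]
    by (simp add: continuous_map_paired case_prod_unfold o_def continuous_map_fst)
  from continuous_map_compose[OF this k]
  have k\<phi>: "continuous_map ?IW Y (\<lambda>(t, w). k (t, \<phi> w))"
    by (simp add: o_def case_prod_unfold)
  have "continuous_map ?IW (pullback_space B' lam Y pY) (\<lambda>(t, w). (\<beta> w, k (t, \<phi> w)))"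
    unfolding continuous_map_pullback_space_iff
  proof
    show "continuous_map ?IW (prod_topology B' Y) (\<lambda>(t, w). (\<beta> w, k (t, \<phi> w)))"
      using k\<phi> continuous_map_compose[OF continuous_map_snd \<beta>]
      by (simp add: continuous_map_paired case_prod_unfold o_def)
    show "(\<lambda>(t, w). (\<beta> w, k (t, \<phi> w))) \<in> topspace ?IW \<rightarrow>
            {(b', y). b' \<in> topspace B' \<and> y \<in> topspace Y \<and> lam b' = pY y}"
      using continuous_map_image_subset_topspace[OF k\<phi>] continuous_map_image_subset_topspace[OF \<beta>]
        continuous_map_image_subset_topspace[OF \<phi>] kt \<phi>p
      by (fastforce simp: image_subset_iff)
  qed
  then show ?thesis
    unfolding fp_homotopic_def homotopic_with_def
    using k0 k1 kt \<beta>s \<phi>s continuous_map_image_subset_topspace[OF lam]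
      continuous_map_image_subset_topspace[OF \<phi>]
    by (intro exI[of _ "\<lambda>(t, w). (\<beta> w, k (t, \<phi> w))"])
       (fastforce simp: pullback_proj_def pullback_sec_def image_subset_iff)
qed

lemma continuous_map_pullback_fib_prod_space:
  "continuous_map (pullback_space B' lam (fib_prod_space p X) (fib_prod_proj p))
     (fib_prod_space pullback_proj (pullback_space B' lam X p)) (\<lambda>(b, (x, y)). ((b, x), (b, y)))"
proof -
  let ?Q = "pullback_space B' lam (fib_prod_space p X) (fib_prod_proj p)"
  have cb: "continuous_map ?Q B' fst"
    unfolding pullback_space_def by (rule continuous_map_subtopology_fst)
  have cxy: "continuous_map ?Q (fib_prod_space p X) snd"
    unfolding pullback_space_def by (rule continuous_map_subtopology_snd)
  have "continuous_map ?Q (pullback_space B' lam X p) (\<lambda>w. (fst w, pr (snd w)))"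
    if pr: "continuous_map (fib_prod_space p X) X pr"
      and "\<And>z. z \<in> topspace (fib_prod_space p X) \<Longrightarrow> p (pr z) = fib_prod_proj p z" for pr
    unfolding continuous_map_pullback_space_iff
    using continuous_map_compose[OF cxy pr] cb that(2)
      continuous_map_image_subset_topspace[OF continuous_map_compose[OF cxy pr]]
    by (auto simp: continuous_map_paired o_def topspace_pullback_space)
  from this[OF continuous_map_fst_fib_prod_space] this[OF continuous_map_snd_fib_prod_space]
  have c1: "continuous_map ?Q (pullback_space B' lam X p) (\<lambda>w. (fst w, fst (snd w)))"
    and c2: "continuous_map ?Q (pullback_space B' lam X p) (\<lambda>w. (fst w, snd (snd w)))"
    by (auto simp: fib_prod_proj_def topspace_fib_prod_space)
  show ?thesis
    unfolding continuous_map_fib_prod_space_iff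
    using c1 c2 continuous_map_funspace[OF c1] continuous_map_funspace[OF c2]
    by (auto simp: continuous_map_paired case_prod_unfold pullback_proj_def Pi_iff)
qed

lemma continuous_map_pullback_fib_path_space:
  assumes \<psi>: "continuous_map W (fib_path_space B X p) \<psi>" and \<beta>: "continuous_map W B' \<beta>"
    and \<psi>\<beta>: "\<And>w. w \<in> topspace W \<Longrightarrow> fst (\<psi> w) = lam (\<beta> w)"
  shows "continuous_map W (fib_path_space B' (pullback_space B' lam X p) pullback_proj)
           (\<lambda>w. (\<beta> w, restrict (\<lambda>t. (\<beta> w, snd (\<psi> w) t)) {0..1}))"
proof (rule continuous_map_into_fib_path_space[OF \<beta>])
  let ?WI = "prod_topology W (top_of_set {0..1::real})"
  have ev: "continuous_map ?WI X (\<lambda>(w, t). snd (\<psi> w) t)"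
    using continuous_map_path_space_uncurry[OF continuous_map_compose[OF \<psi> continuous_map_snd_fib_path_space]]
    by (simp add: o_def)
  have "snd (\<psi> w) t \<in> topspace X \<and> p (snd (\<psi> w) t) = lam (\<beta> w)" if "w \<in> topspace W" "t \<in> {0..1}" for w t
    using continuous_map_image_subset_topspace[OF \<psi>] \<psi>\<beta> that
    by (fastforce simp: topspace_fib_path_space pathin_def dest: continuous_map_image_subset_topspace)
  then show "continuous_map ?WI (pullback_space B' lam X p) (\<lambda>(w, t). (\<beta> w, snd (\<psi> w) t))"
    unfolding continuous_map_pullback_space_iff
    using ev continuous_map_compose[OF continuous_map_fst \<beta>] continuous_map_image_subset_topspace[OF \<beta>]
    by (auto simp: continuous_map_paired case_prod_unfold o_def)
qed (simp add: pullback_proj_def)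

lemma fp_homotopic_pullback_fib_prod_space:
  assumes hom: "fp_homotopic B Z pZ sZ (fib_prod_space p X) (fib_prod_proj p) (fib_prod_sec s) f g"
    and lam: "continuous_map B' B lam" and \<beta>: "continuous_map W B' \<beta>" and \<phi>: "continuous_map W Z \<phi>"
    and "\<And>w. w \<in> topspace W \<Longrightarrow> pZ (\<phi> w) = lam (\<beta> w)"
    and "\<And>b. b \<in> topspace B' \<Longrightarrow> \<beta> (sW b) = b"
    and "\<And>b. b \<in> topspace B' \<Longrightarrow> \<phi> (sW b) = sZ (lam b)"
  shows "fp_homotopic B' W \<beta> sW (fib_prod_space pullback_proj (pullback_space B' lam X p))
           (fib_prod_proj pullback_proj) (fib_prod_sec (pullback_sec lam s))
           (\<lambda>w. ((\<beta> w, fst (f (\<phi> w))), (\<beta> w, snd (f (\<phi> w)))))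
           (\<lambda>w. ((\<beta> w, fst (g (\<phi> w))), (\<beta> w, snd (g (\<phi> w)))))"
proof -
  have "fp_homotopic B' W \<beta> sW (fib_prod_space pullback_proj (pullback_space B' lam X p))
          (fib_prod_proj pullback_proj) (fib_prod_sec (pullback_sec lam s))
          ((\<lambda>(b, (x, y)). ((b, x), (b, y))) \<circ> (\<lambda>w. (\<beta> w, f (\<phi> w))))
          ((\<lambda>(b, (x, y)). ((b, x), (b, y))) \<circ> (\<lambda>w. (\<beta> w, g (\<phi> w))))"
    by (rule fp_homotopic_compose_left[OF fp_homotopic_pullback[OF hom lam \<beta> \<phi> assms(5-7)]
          continuous_map_pullback_fib_prod_space])
       (auto simp: fib_prod_proj_eq fib_prod_sec_def pullback_sec_def pullback_proj_def)
  then show ?thesis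
    by (simp add: o_def case_prod_unfold)
qed

lemma continuous_map_fib_prod_space_pullback_snd:
  "continuous_map (fib_prod_space pullback_proj (pullback_space B' lam X p)) (fib_prod_space p X)
     (\<lambda>z. (snd (fst z), snd (snd z)))"
proof -
  have cY: "continuous_map (pullback_space B' lam X p) X snd"
    unfolding pullback_space_def by (rule continuous_map_subtopology_snd)
  show ?thesis
    unfolding continuous_map_fib_prod_space_iff
    using continuous_map_compose[OF continuous_map_fst_fib_prod_space cY]
      continuous_map_compose[OF continuous_map_snd_fib_prod_space cY]
    by (auto simp: continuous_map_paired o_def topspace_fib_prod_space topspace_pullback_space
        pullback_proj_def)
qed

lemma fp_sectional_pullback_preimage:
  fixes lam :: "'c \<Rightarrow> 'b"
  assumes fps: "fibrewise_pointed_space B X p s" and lam: "continuous_map B' B lam"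
    and V: "fp_sectional B (fib_path_space B X p) fib_path_proj (fib_path_sec s)
              (fib_prod_space p X) (fib_prod_proj p) (fib_prod_sec s) fib_Pi V"
  shows "fp_sectional B' (fib_path_space B' (pullback_space B' lam X p) pullback_proj) fib_path_proj
           (fib_path_sec (pullback_sec lam s))
           (fib_prod_space pullback_proj (pullback_space B' lam X p)) (fib_prod_proj pullback_proj)
           (fib_prod_sec (pullback_sec lam s)) fib_Pi
           {z \<in> topspace (fib_prod_space pullback_proj (pullback_space B' lam X p)).
              (snd (fst z), snd (snd z)) \<in> V}"
proof -
  note cs = fibrewise_pointed_spaceD(2)[OF fps] and ps = fibrewise_pointed_spaceD(3)[OF fps]
  let ?XX = "fib_prod_space p X"
  let ?Y = "pullback_space B' lam X p"
  let ?YY = "fib_prod_space pullback_proj ?Y"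
  let ?q = "fib_prod_proj pullback_proj" and ?r = "fib_prod_sec (pullback_sec lam s)"
  obtain \<sigma> where oV: "openin ?XX V" and secV: "fib_prod_sec s ` topspace B \<subseteq> V"
    and c\<sigma>: "continuous_map (subtopology ?XX V) (fib_path_space B X p) \<sigma>"
    and \<sigma>p: "\<forall>z\<in>V. fib_path_proj (\<sigma> z) = fib_prod_proj p z"
    and \<sigma>s: "\<forall>b\<in>topspace B. \<sigma> (fib_prod_sec s b) = fib_path_sec s b"
    and hom: "fp_homotopic B (subtopology ?XX V) (fib_prod_proj p) (fib_prod_sec s)
                ?XX (fib_prod_proj p) (fib_prod_sec s) (fib_Pi \<circ> \<sigma>) id"
    using V unfolding fp_sectional_iff by blast
  have q: "?q = fst \<circ> fst"
    by (auto simp: fib_prod_proj_eq pullback_proj_def)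
  have tsYY: "z \<in> topspace ?YY \<longleftrightarrow>
     fst (fst z) \<in> topspace B' \<and> snd (fst z) \<in> topspace X \<and> lam (fst (fst z)) = p (snd (fst z)) \<and>
     snd (snd z) \<in> topspace X \<and> lam (fst (fst z)) = p (snd (snd z)) \<and> fst (fst z) = fst (snd z)" for z
    by (cases z) (auto simp: topspace_fib_prod_space topspace_pullback_space pullback_proj_def)
  define \<phi> where "\<phi> z = (snd (fst z), snd (snd z))" for z :: "('c \<times> 'a) \<times> ('c \<times> 'a)"
  define U where "U = {z \<in> topspace ?YY. \<phi> z \<in> V}"
  have c\<phi>: "continuous_map ?YY ?XX \<phi>"
    unfolding \<phi>_def by (rule continuous_map_fib_prod_space_pullback_snd)
  have oU: "openin ?YY U"
    unfolding U_def by (rule openin_continuous_map_preimage[OF c\<phi> oV])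
  have tsU: "topspace (subtopology ?YY U) = U"
    using openin_subset[OF oU] by (rule topspace_subtopology_subset)
  have c\<phi>U: "continuous_map (subtopology ?YY U) (subtopology ?XX V) \<phi>"
    unfolding U_def by (rule continuous_map_subtopology_preimage[OF c\<phi>])
  have "continuous_map ?Y B' fst"
    unfolding pullback_space_def by (rule continuous_map_subtopology_fst)
  from continuous_map_compose[OF continuous_map_fst_fib_prod_space this]
  have cq: "continuous_map (subtopology ?YY U) B' ?q"
    by (intro continuous_map_from_subtopology) (simp add: q)
  have \<phi>r: "\<phi> (?r b) = fib_prod_sec s (lam b)" for b
    by (simp add: \<phi>_def fib_prod_sec_def pullback_sec_def)
  have rU: "?r ` topspace B' \<subseteq> U"
    using secV continuous_map_image_subset_topspace[OF lam] continuous_map_image_subset_topspace[OF cs] ps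
    by (auto simp: U_def tsYY \<phi>_def fib_prod_sec_def pullback_sec_def image_subset_iff)
  have \<sigma>\<phi>: "fst (\<sigma> (\<phi> z)) = lam (?q z)" if "z \<in> U" for z
    using that \<sigma>p by (auto simp: U_def tsYY q fib_path_proj_def fib_prod_proj_eq \<phi>_def)
  define \<sigma>' where "\<sigma>' z = (?q z, restrict (\<lambda>t. (?q z, snd (\<sigma> (\<phi> z)) t)) {0..1})" for z
  have c\<sigma>': "continuous_map (subtopology ?YY U) (fib_path_space B' ?Y pullback_proj) \<sigma>'"
    unfolding \<sigma>'_def
    using continuous_map_compose[OF c\<phi>U c\<sigma>]
    by (intro continuous_map_pullback_fib_path_space[OF _ cq]) (auto simp: o_def \<sigma>\<phi> tsU)
  have "fp_homotopic B' (subtopology ?YY U) ?q ?r ?YY ?q ?r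
          (\<lambda>z. ((?q z, fst ((fib_Pi \<circ> \<sigma>) (\<phi> z))), (?q z, snd ((fib_Pi \<circ> \<sigma>) (\<phi> z)))))
          (\<lambda>z. ((?q z, fst (id (\<phi> z))), (?q z, snd (id (\<phi> z)))))"
    by (rule fp_homotopic_pullback_fib_prod_space[OF hom lam cq c\<phi>U])
       (auto simp: tsU U_def tsYY q \<phi>_def fib_prod_proj_eq fib_prod_sec_def pullback_sec_def)
  then have hom': "fp_homotopic B' (subtopology ?YY U) ?q ?r ?YY ?q ?r (fib_Pi \<circ> \<sigma>') id"
    by (rule fp_homotopic_eq) (use rU tsU in \<open>auto simp: U_def tsYY q \<sigma>'_def fib_Pi_eq \<phi>_def\<close>)
  have qr: "?q (?r b) = b" for b
    by (simp add: fib_prod_proj_eq pullback_proj_def fib_prod_sec_def pullback_sec_def)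
  have \<sigma>'r: "\<sigma>' (?r b) = fib_path_sec (pullback_sec lam s) b" if "b \<in> topspace B'" for b
  proof -
    have "\<sigma> (\<phi> (?r b)) = fib_path_sec s (lam b)"
      using \<sigma>s continuous_map_image_subset_topspace[OF lam] that by (auto simp: \<phi>r)
    then have "\<sigma>' (?r b) = (b, restrict (\<lambda>t. (b, snd (fib_path_sec s (lam b)) t)) {0..1})"
      by (simp only: \<sigma>'_def qr)
    then show ?thesis
      by (simp add: fib_path_sec_def pullback_sec_def cong: restrict_cong)
  qed
  have "fp_sectional B' (fib_path_space B' ?Y pullback_proj) fib_path_proj (fib_path_sec (pullback_sec lam s))
          ?YY ?q ?r fib_Pi U"
    unfolding fp_sectional_iff
    using oU rU c\<sigma>' \<sigma>'r hom' by (auto intro!: exI[of _ \<sigma>'] simp: \<sigma>'_def fib_path_proj_def)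
  then show ?thesis
    by (simp add: U_def \<phi>_def)
qed

lemma catBB_le_TCBB:
  assumes "fibrewise_pointed_space B X p s"
  shows "catBB B X p s \<le> TCBB B X p s"
  unfolding catBB_def TCBB_def
  by (rule secatBB_le_preimage[where \<phi> = "\<lambda>x. (x, s (p x))"])
     (use continuous_map_image_subset_topspace[OF continuous_map_fib_prod_space_Pair_section[OF assms]]
        fp_sectional_section_preimage[OF assms] in auto)

lemma TCBB_le_catBB_fib_prod_space:
  assumes "fibrewise_pointed_space B X p s"
  shows "TCBB B X p s \<le> catBB B (fib_prod_space p X) (fib_prod_proj p) (fib_prod_sec s)"
  unfolding catBB_def TCBB_def
  by (rule secatBB_factor_le[OF continuous_map_fib_path_sec[OF assms]])
     (auto simp: fib_path_proj_def fib_path_sec_def fib_Pi_def fib_prod_sec_def)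

lemma TCBB_pullback_le:
  assumes "fibrewise_pointed_space B X p s" and "continuous_map B' B lam"
  shows "TCBB B' (pullback_space B' lam X p) pullback_proj (pullback_sec lam s) \<le> TCBB B X p s"
  unfolding TCBB_def
proof (rule secatBB_le_preimage[where \<phi> = "\<lambda>z. (snd (fst z), snd (snd z))"])
  show "(\<lambda>z. (snd (fst z), snd (snd z))) ` topspace (fib_prod_space pullback_proj (pullback_space B' lam X p))
          \<subseteq> topspace (fib_prod_space p X)"
    using continuous_map_image_subset_topspace[OF continuous_map_fib_prod_space_pullback_snd] .
qed (rule fp_sectional_pullback_preimage[OF assms])

theorem proposition3p3:
  fixes B :: "'b topology" and X :: "'a topology" and p :: "'a \<Rightarrow> 'b" and s :: "'b \<Rightarrow> 'a"
  assumes "fibrewise_pointed_space B X p s"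
  shows "catBB B X p s \<le> TCBB B X p s
       \<and> TCBB B X p s \<le> catBB B (fib_prod_space p X) (fib_prod_proj p) (fib_prod_sec s)
       \<and> (\<forall>(B' :: 'c topology) (lam :: 'c \<Rightarrow> 'b). continuous_map B' B lam \<longrightarrow>
            TCBB B' (pullback_space B' lam X p) pullback_proj (pullback_sec lam s)
              \<le> TCBB B X p s)"
  using catBB_le_TCBB[OF assms] TCBB_le_catBB_fib_prod_space[OF assms] TCBB_pullback_le[OF assms]
  by blast

end
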